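(* Let $n\ge3$, $k\ge0$, and let $S\subseteq\mathrm{Inc}(A,B)$ be independent in $G_n^k$. If $S$ contains pairs $(a_1,y)$ and $(x,b_{k+2})$ with $a_1\preceq y\prec x\preceq b_{k+2}$, then $|B(a_1,S)|+|A(b_{k+2},S)|\le k+3-n$.
   Context: For integers $n\ge3$, $k\ge0$, the crown $S_n^k$ is the poset with ground set $A\cup B$, $A=\{a_1,\dots,a_{n+k}\}$, $B=\{b_1,\dots,b_{n+k}\}$, indices cyclic modulo $n+k$; elements of $A$ are pairwise incomparable, as are elements of $B$, and $a_i$ is incomparable to $b_j$ when $j\in\{i,\dots,i+k\}$ (mod $n+k$), while $a_i<b_j$ otherwise. $\mathrm{Inc}(A,B)$ is the set of pairs $(a,b)\in A\times B$ with $a$ incomparable to $b$; $G_n^k$ has vertex set $\mathrm{Inc}(A,B)$ with $(a,b)$ adjacent to $(x,y)$ iff $a<y$ and $x<b$. $B(a,S)=\{b:(a,b)\in S\}$, $A(b,S)=\{a:(a,b)\in S\}$. Circle conventions: points $u_1,\dots,u_{n+k}$ lie clockwise on a circle, with $a_i$ and $b_i$ both at $u_i$; a chain $p_1\,R_1\,p_2\cdots p_\ell$ with $R_j\in\{\prec,\preceq\}$ means travelling clockwise from the position of $p_1$ until first reaching the position of $p_\ell$ one meets the positions of $p_2,\dots,p_{\ell-1}$ in order, $\prec$ requiring distinct consecutive positions and $\preceq$ allowing equality. *)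

theory Defs
  imports Main
begin

text \<open>Crown S_n^k with N = n+k. Elements are encoded by their index in {1..N}:
  a pair (i,j) :: nat \<times> nat stands for (a_i, b_j).\<close>

definition crown_N :: "nat \<Rightarrow> nat \<Rightarrow> nat" where
  "crown_N n k = n + k"

definition crown_inc :: "nat \<Rightarrow> nat \<Rightarrow> nat \<Rightarrow> nat \<Rightarrow> bool" where
  "crown_inc n k i j \<longleftrightarrow> 1 \<le> i \<and> i \<le> crown_N n k \<and> 1 \<le> j \<and> j \<le> crown_N n k \<and>
     (j + crown_N n k - i) mod crown_N n k \<le> k"

definition crown_less :: "nat \<Rightarrow> nat \<Rightarrow> nat \<Rightarrow> nat \<Rightarrow> bool" where
  "crown_less n k i j \<longleftrightarrow> 1 \<le> i \<and> i \<le> crown_N n k \<and> 1 \<le> j \<and> j \<le> crown_N n k \<and>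
     \<not> crown_inc n k i j"

definition Inc :: "nat \<Rightarrow> nat \<Rightarrow> (nat \<times> nat) set" where
  "Inc n k = {(i, j). crown_inc n k i j}"

definition G_adj :: "nat \<Rightarrow> nat \<Rightarrow> nat \<times> nat \<Rightarrow> nat \<times> nat \<Rightarrow> bool" where
  "G_adj n k u v \<longleftrightarrow> crown_less n k (fst u) (snd v) \<and> crown_less n k (fst v) (snd u)"

definition G_independent :: "nat \<Rightarrow> nat \<Rightarrow> (nat \<times> nat) set \<Rightarrow> bool" where
  "G_independent n k S \<longleftrightarrow> S \<subseteq> Inc n k \<and> (\<forall>u\<in>S. \<forall>v\<in>S. \<not> G_adj n k u v)"

definition Bset :: "nat \<Rightarrow> (nat \<times> nat) set \<Rightarrow> nat set" where
  "Bset a S = {b. (a, b) \<in> S}"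

definition Aset :: "nat \<Rightarrow> (nat \<times> nat) set \<Rightarrow> nat set" where
  "Aset b S = {a. (a, b) \<in> S}"

definition cw_dist :: "nat \<Rightarrow> nat \<Rightarrow> nat \<Rightarrow> nat" where
  "cw_dist N p q = (q + N - p) mod N"

text \<open>Chain p_1 R_1 p_2 ... p_l of positions: travelling clockwise from p_1 until first
  reaching p_l, one meets p_2, ..., p_{l-1} in order; strict!i = True means R_{i+1} is
  the strict relation (distinct consecutive positions), False means it allows equality.\<close>
definition cw_chain :: "nat \<Rightarrow> nat list \<Rightarrow> bool list \<Rightarrow> bool" where
  "cw_chain N ps strict \<longleftrightarrow> ps \<noteq> [] \<and> length strict = length ps - 1 \<and>
     (\<forall>i < length ps - 1.
        cw_dist N (hd ps) (ps ! i) \<le> cw_dist N (hd ps) (ps ! Suc i) \<and>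
        (strict ! i \<longrightarrow> cw_dist N (hd ps) (ps ! i) < cw_dist N (hd ps) (ps ! Suc i)))"

end

theory Submission
  imports Defs
begin

text \<open>All pairs of \<open>S\<close> at \<open>a\<^sub>1\<close> use some \<open>b \<in> {1..k+1}\<close> and all pairs at \<open>b\<^sub>k\<^sub>+\<^sub>2\<close> use some
  \<open>a \<in> {2..k+2}\<close>. Since \<open>a\<^sub>1 < b\<^sub>k\<^sub>+\<^sub>2\<close>, independence forces every such \<open>a\<close> to be incomparable
  to every such \<open>b\<close>, which for \<open>b < a\<close> means \<open>a - b \<ge> n\<close>. The hypothesis \<open>y < x\<close> yields
  consecutive elements \<open>b < a\<close> of \<open>B(a\<^sub>1,S) \<union> A(b\<^sub>k\<^sub>+\<^sub>2,S)\<close>, so this window of width \<open>\<ge> n\<close>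
  is free of both sets; shifting \<open>A(b\<^sub>k\<^sub>+\<^sub>2,S)\<close> down by one makes it disjoint from
  \<open>B(a\<^sub>1,S)\<close>, and both then fit into the \<open>k + 3 - n\<close> positions of \<open>{1..k+1}\<close> outside the window.\<close>

lemma cyclic_diff_eq:
  assumes "1 \<le> (p::nat)" "p \<le> N" "1 \<le> q" "q \<le> N"
  shows "(p + N - q) mod N = (if q \<le> p then p - q else p + N - q)"
proof (cases "q \<le> p")
  case True
  then have "p + N - q = (p - q) + N" "p - q < N" using assms by arith+
  then show ?thesis using True by (simp only: mod_add_self2 mod_less) simp
next
  case False
  then have "p + N - q < N" using assms by arith
  then show ?thesis using False by simp
qed

lemma crown_inc_iff:
  "crown_inc n k i j \<longleftrightarrow> i \<in> {1..n + k} \<and> j \<in> {1..n + k} \<and>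
     (if i \<le> j then j - i \<le> k else j + n \<le> i)"
  using cyclic_diff_eq[of j "n + k" i] by (auto simp: crown_inc_def crown_N_def)

lemma crown_inc_descending_gap:
  assumes "crown_inc n k a b" "b < a"
  shows "n \<le> a - b"
  using assms by (auto simp: crown_inc_iff)

lemma crown_inc_1_range:
  assumes "crown_inc n k 1 b"
  shows "b \<in> {1..k + 1}"
  using assms by (auto simp: crown_inc_iff split: if_splits)

lemma crown_inc_k2_range:
  assumes "crown_inc n k a (k + 2)"
  shows "a \<in> {2..k + 2}"
  using assms by (auto simp: crown_inc_iff split: if_splits)

lemma crown_less_1_k2:
  assumes "n \<ge> 2"
  shows "crown_less n k 1 (k + 2)"
  using assms by (auto simp: crown_less_def crown_inc_iff crown_N_def)

lemma independent_cross_inc: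
  assumes "G_independent n k S" "(u, v) \<in> S" "(a, b) \<in> S" "crown_less n k u b"
  shows "crown_inc n k a v"
proof -
  have "crown_inc n k u v" "crown_inc n k a b"
    using assms(1-3) by (auto simp: G_independent_def Inc_def)
  moreover have "\<not> G_adj n k (u, v) (a, b)"
    using assms(1-3) by (auto simp: G_independent_def)
  then have "\<not> crown_less n k a v"
    using assms(4) by (simp add: G_adj_def)
  ultimately show ?thesis by (auto simp: crown_less_def crown_inc_def)
qed

lemma cw_dist_1:
  assumes "1 \<le> p" "p \<le> N"
  shows "cw_dist N 1 p = p - 1"
  using assms cyclic_diff_eq[of p N 1] by (simp add: cw_dist_def)

lemma cw_chain_strict_second_step:
  assumes "cw_chain N [1, y, x, z] [False, True, False]"
    and "y \<in> {1..N}" "x \<in> {1..N}"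
  shows "y < x"
proof -
  have "cw_dist N 1 y < cw_dist N 1 x"
    using assms(1) unfolding cw_chain_def by (auto dest: spec[of _ 1])
  then show ?thesis using assms(2,3) cw_dist_1[of y N] cw_dist_1[of x N] by simp
qed

lemma exists_consecutive_pair:
  fixes A B :: "nat set"
  assumes "finite A" "finite B" "y \<in> B" "x \<in> A" "y < x"
  obtains b a where "b \<in> B" "a \<in> A" "b < a" "\<forall>c \<in> A \<union> B. c \<le> b \<or> a \<le> c"
proof -
  define b where "b = Max {c \<in> B. c < x}"
  have below_x: "finite {c \<in> B. c < x}" "y \<in> {c \<in> B. c < x}"
    using assms by auto
  then have b: "b \<in> B" "b < x" and b_max: "\<And>c. c \<in> B \<Longrightarrow> c < x \<Longrightarrow> c \<le> b"
  proof -
    have "b \<in> {c \<in> B. c < x}"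
      unfolding b_def using Max_in[OF below_x(1)] below_x(2) by blast
    then show "b \<in> B" "b < x" by auto
    show "\<And>c. c \<in> B \<Longrightarrow> c < x \<Longrightarrow> c \<le> b"
      unfolding b_def using below_x(1) by simp
  qed
  define a where "a = Min {c \<in> A. b < c}"
  have above_b: "finite {c \<in> A. b < c}" "x \<in> {c \<in> A. b < c}"
    using assms b by auto
  then have a: "a \<in> A" "b < a" and a_min: "\<And>c. c \<in> A \<Longrightarrow> b < c \<Longrightarrow> a \<le> c"
  proof -
    have "a \<in> {c \<in> A. b < c}"
      unfolding a_def using Min_in[OF above_b(1)] above_b(2) by blast
    then show "a \<in> A" "b < a" by auto
    show "\<And>c. c \<in> A \<Longrightarrow> b < c \<Longrightarrow> a \<le> c"
      unfolding a_def using above_b(1) by simp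
  qed
  have "a \<le> x" using a_min[OF assms(4)] b(2) by simp
  then have "\<forall>c \<in> A \<union> B. c \<le> b \<or> a \<le> c"
    using a_min b_max by fastforce
  with a b that show ?thesis by blast
qed

lemma separated_sets_card_bound:
  fixes A B :: "nat set"
  assumes B_sub: "B \<subseteq> {1..m}" and A_sub: "A \<subseteq> {2..m + 1}" and "2 \<le> d"
    and gap: "\<And>b a. b \<in> B \<Longrightarrow> a \<in> A \<Longrightarrow> b < a \<Longrightarrow> d \<le> a - b"
    and "y \<in> B" "x \<in> A" "y < x"
  shows "card B + card A + d \<le> m + 2"
proof -
  have fin: "finite A" "finite B"
    using A_sub B_sub finite_subset by blast+
  obtain b a where ba: "b \<in> B" "a \<in> A" "b < a" and empty_window: "\<forall>c \<in> A \<union> B. c \<le> b \<or> a \<le> c"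
    using exists_consecutive_pair[OF fin assms(5-7)] .
  have "d \<le> a - b" using gap ba by blast
  define shift :: "nat \<Rightarrow> nat" where "shift c = c - 1" for c
  have A_ge_2: "2 \<le> c" if "c \<in> A" for c
    using that A_sub by auto
  have inj: "inj_on shift A"
  proof (rule inj_onI)
    fix u v assume "u \<in> A" "v \<in> A" "shift u = shift v"
    then show "u = v" using A_ge_2[of u] A_ge_2[of v] by (simp add: shift_def)
  qed
  have disjoint: "B \<inter> shift ` A = {}"
  proof -
    have "c - 1 \<notin> B" if "c \<in> A" for c
      using gap[of "c - 1" c] that A_ge_2[OF that] \<open>2 \<le> d\<close> by auto
    then show ?thesis by (auto simp: shift_def)
  qed
  have "B \<subseteq> {1..b} \<union> {a - 1..m}"
    using empty_window B_sub by fastforce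
  moreover have "shift ` A \<subseteq> {1..b} \<union> {a - 1..m}"
  proof
    fix c assume "c \<in> shift ` A"
    then obtain c' where "c' \<in> A" "c = c' - 1" by (auto simp: shift_def)
    moreover have "c' \<le> b \<or> a \<le> c'" "2 \<le> c'" "c' \<le> m + 1"
      using empty_window \<open>c' \<in> A\<close> A_sub by auto
    ultimately show "c \<in> {1..b} \<union> {a - 1..m}" by auto
  qed
  ultimately have "card (B \<union> shift ` A) \<le> card ({1..b} \<union> {a - 1..m})"
    by (intro card_mono) auto
  also have "\<dots> \<le> b + (m + 2 - a)"
    using card_Un_le[of "{1..b}" "{a - 1..m}"] by simp
  finally have "card B + card A \<le> b + (m + 2 - a)"
    using card_Un_disjoint[OF fin(2) _ disjoint] fin(1) card_image[OF inj] by simp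
  moreover have "a \<le> m + 1" using ba(2) A_sub by auto
  ultimately show ?thesis using \<open>d \<le> a - b\<close> \<open>b < a\<close> by linarith
qed

theorem lemma6p6:
  fixes n k x y :: nat and S :: "(nat \<times> nat) set"
  assumes "n \<ge> 3"
    and "G_independent n k S"
    and "(1, y) \<in> S"
    and "(x, k + 2) \<in> S"
    and "cw_chain (crown_N n k) [1, y, x, k + 2] [False, True, False]"
  shows "int (card (Bset 1 S)) + int (card (Aset (k + 2) S)) \<le> int k + 3 - int n"
proof -
  have cross_inc: "crown_inc n k a b" if "(1, b) \<in> S" "(a, k + 2) \<in> S" for a b
    using independent_cross_inc[OF assms(2) that crown_less_1_k2] assms(1) by simp
  have S_inc: "crown_inc n k a b" if "(a, b) \<in> S" for a b
    using assms(2) that by (auto simp: G_independent_def Inc_def)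
  have B_sub: "Bset 1 S \<subseteq> {1..k + 1}"
    using S_inc[THEN crown_inc_1_range] by (auto simp: Bset_def)
  have A_sub: "Aset (k + 2) S \<subseteq> {2..k + 2}"
    using S_inc[THEN crown_inc_k2_range] by (auto simp: Aset_def)
  have gap: "n \<le> a - b" if "b \<in> Bset 1 S" "a \<in> Aset (k + 2) S" "b < a" for a b
    using crown_inc_descending_gap[OF cross_inc] that by (simp add: Aset_def Bset_def)
  have "y < x"
    using cw_chain_strict_second_step[OF assms(5)] S_inc[OF assms(3)] S_inc[OF assms(4)]
    by (simp add: crown_inc_def)
  then have "card (Bset 1 S) + card (Aset (k + 2) S) + n \<le> k + 3"
    using separated_sets_card_bound[of "Bset 1 S" "k + 1" "Aset (k + 2) S" n y x]
      B_sub A_sub gap assms(1,3,4)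
    by (simp add: Aset_def Bset_def)
  then show ?thesis by linarith
qed

end
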